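(* Let $H$ and $H_j$ be $n$-qubit Hermitian operators, each with at most $m$ nonzero Pauli coefficients, and let $T\in\mathbb R$. Let $W$ be any Hermitian operator with $\|W\|_\infty<\pi$ such that $e^{-iW}=e^{i\phi}e^{iHT}e^{-iH_jT}$ for some $\phi\in\mathbb R$. Then $W$ has at most $4^m$ nonzero Pauli coefficients.
   Context: Pauli operators are labelled by $v\in\mathbb F_2^{2n}$, $P_v\in\{I,X,Y,Z\}^{\otimes n}$ (identity labelled $0$); every $n$-qubit operator has a unique expansion in the $P_v$. The number of nonzero coefficients of $W$ in this expansion is its Pauli sparsity $\operatorname{supp}_P(W)$. $\|\cdot\|_\infty$ is the operator norm. *)

theory Defs
  imports "HOL-Analysis.Analysis" "Jordan_Normal_Form.Matrix"
begin

text \<open>n-qubit operators are complex matrices of dimension 2^n (JNF type complex mat).\<close>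

definition is_hermitian :: "complex mat \<Rightarrow> bool" where
  "is_hermitian A \<longleftrightarrow> square_mat A \<and>
     (\<forall>i < dim_row A. \<forall>j < dim_row A. A $$ (i, j) = cnj (A $$ (j, i)))"

definition mtrace :: "complex mat \<Rightarrow> complex" where
  "mtrace A = (\<Sum>i < dim_row A. A $$ (i, i))"

definition mexp :: "complex mat \<Rightarrow> complex mat" where
  "mexp A = mat (dim_row A) (dim_col A)
     (\<lambda>(i, j). \<Sum>k. (A ^\<^sub>m k) $$ (i, j) / of_nat (fact k))"

definition vnorm :: "complex vec \<Rightarrow> real" where
  "vnorm x = sqrt (\<Sum>i < dim_vec x. (cmod (x $ i))^2)"

definition op_norm :: "complex mat \<Rightarrow> real" where
  "op_norm A = Sup {vnorm (A *\<^sub>v x) | x. x \<in> carrier_vec (dim_col A) \<and> vnorm x \<le> 1}"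

text \<open>Single-qubit Paulis: 0 = I, 1 = X, 2 = Y, 3 = Z.\<close>
definition pauli1 :: "nat \<Rightarrow> complex mat" where
  "pauli1 a = (if a = 1 then mat_of_rows_list 2 [[0, 1], [1, 0]]
     else if a = 2 then mat_of_rows_list 2 [[0, -\<i>], [\<i>, 0]]
     else if a = 3 then mat_of_rows_list 2 [[1, 0], [0, -1]]
     else mat_of_rows_list 2 [[1, 0], [0, 1]])"

text \<open>Pauli strings on n qubits: lists of length n over {0,1,2,3}
  (in bijection with labels v in F_2^{2n}); identity is the all-zero string.\<close>
definition pauli_strings :: "nat \<Rightarrow> nat list set" where
  "pauli_strings n = {s. length s = n \<and> set s \<subseteq> {0..3}}"

text \<open>Tensor product P_s = P_{s_0} (x) ... (x) P_{s_{n-1}}; qubit k is bit k of the index.\<close>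
definition pauli_op :: "nat \<Rightarrow> nat list \<Rightarrow> complex mat" where
  "pauli_op n s = mat (2^n) (2^n)
     (\<lambda>(i, j). \<Prod>k < n. pauli1 (s ! k) $$ (i div 2^k mod 2, j div 2^k mod 2))"

text \<open>Coefficient of P_s in the (unique) Pauli expansion W = sum_s c_s P_s.\<close>
definition pauli_coeff :: "nat \<Rightarrow> complex mat \<Rightarrow> nat list \<Rightarrow> complex" where
  "pauli_coeff n W s = mtrace (pauli_op n s * W) / 2^n"

definition pauli_sparsity :: "nat \<Rightarrow> complex mat \<Rightarrow> nat" where
  "pauli_sparsity n W = card {s \<in> pauli_strings n. pauli_coeff n W s \<noteq> 0}"

end

(*
  The labels of the Pauli strings with nonzero coefficient in H or Hj generate a subgroup K of
  the label group F_2^{2n} with at most 2^{2m} elements. Since a product of two Pauli strings is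
  a phase times the Pauli string of the sum of their labels, the operators whose Pauli expansion
  is supported on K form an algebra; it is closed under entrywise convergent series, so it contains
  exp(iTH), exp(-iTHj) and hence U = exp(-iW). Finally W is Hermitian, hence diagonalizable with
  real spectrum, which lies in (-pi, pi) by the norm bound. There lambda -> exp(-i lambda) is
  injective, so interpolating its inverse on the eigenvalues of U gives a polynomial p with
  W = p(U). Hence W is supported on K as well.
*)

theory Submission
  imports Defs Jordan_Normal_Form.Jordan_Normal_Form_Existence Jordan_Normal_Form.Jordan_Normal_Form_Uniqueness
begin

unbundle bit_operations_syntax

section \<open>Matrix exponential and polynomials of matrices\<close>

lemma index_mult_mat_sum:
  assumes "A \<in> carrier_mat a b" "B \<in> carrier_mat b c" "i < a" "j < c"
  shows "(A * B) $$ (i, j) = (\<Sum>l<b. A $$ (i, l) * B $$ (l, j))"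
  using assms by (auto simp: scalar_prod_def atLeast0LessThan intro!: sum.cong)

lemma index_mult_mat_vec_sum:
  "A \<in> carrier_mat d d \<Longrightarrow> v \<in> carrier_vec d \<Longrightarrow> i < d \<Longrightarrow>
    (A *\<^sub>v v) $ i = (\<Sum>j<d. A $$ (i, j) * v $ j)"
  by (auto simp: scalar_prod_def atLeast0LessThan intro!: sum.cong)

lemma index_mult_mat3_sum:
  assumes P: "P \<in> carrier_mat d d" and X: "X \<in> carrier_mat d d" and Q: "Q \<in> carrier_mat d d"
    and i: "i < d" and j: "j < d"
  shows "(P * X * Q) $$ (i, j) = (\<Sum>a<d. \<Sum>b<d. P $$ (i, a) * X $$ (a, b) * Q $$ (b, j))"
proof -
  have "(P * X * Q) $$ (i, j) = (\<Sum>b<d. (\<Sum>a<d. P $$ (i, a) * X $$ (a, b)) * Q $$ (b, j))"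
    using i by (simp add: index_mult_mat_sum[OF mult_carrier_mat[OF P X] Q i j]
        index_mult_mat_sum[OF P X] del: index_mult_mat)
  also have "\<dots> = (\<Sum>b<d. \<Sum>a<d. P $$ (i, a) * X $$ (a, b) * Q $$ (b, j))"
    by (simp add: sum_distrib_right)
  also have "\<dots> = (\<Sum>a<d. \<Sum>b<d. P $$ (i, a) * X $$ (a, b) * Q $$ (b, j))"
    by (rule sum.swap)
  finally show ?thesis .
qed

lemma similar_mat_wit_entrywise:
  assumes wit: "similar_mat_wit A B P Q" and A: "A \<in> carrier_mat d d"
    and A': "A' \<in> carrier_mat d d" and B': "B' \<in> carrier_mat d d"
    and entry: "\<And>i j. i < d \<Longrightarrow> j < d \<Longrightarrow> A' $$ (i, j) =
            (\<Sum>a<d. \<Sum>b<d. P $$ (i, a) * B' $$ (a, b) * Q $$ (b, j))"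
  shows "similar_mat_wit A' B' P Q"
proof -
  note PQ = similar_mat_witD2[OF A wit]
  have "A' = P * B' * Q"
  proof (rule eq_matI)
    fix i j assume "i < dim_row (P * B' * Q)" "j < dim_col (P * B' * Q)"
    then have "i < d" "j < d" using PQ(6,7) by auto
    then show "A' $$ (i, j) = (P * B' * Q) $$ (i, j)"
      by (simp only: entry index_mult_mat3_sum[OF PQ(6) B' PQ(7)])
  qed (use A' PQ(6,7) in auto)
  with PQ A' B' show ?thesis by (intro similar_mat_witI) auto
qed

lemma diagonal_mat_pow_entry:
  fixes X :: "'a::comm_semiring_1 mat"
  assumes X: "X \<in> carrier_mat d d" "diagonal_mat X" and i: "i < d" and j: "j < d"
  shows "(X ^\<^sub>m k) $$ (i, j) = (if i = j then X $$ (i, i) ^ k else 0)"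
  using j
proof (induction k arbitrary: j)
  case (Suc k)
  have "(X ^\<^sub>m Suc k) $$ (i, j) = (\<Sum>l<d. (X ^\<^sub>m k) $$ (i, l) * X $$ (l, j))"
    using X Suc.prems i by (simp add: index_mult_mat_sum[of _ d d] del: index_mult_mat)
  also have "\<dots> = (\<Sum>l<d. if l = i then X $$ (i, i) ^ k * X $$ (i, j) else 0)"
    using Suc by (intro sum.cong refl) auto
  also have "\<dots> = (if i = j then X $$ (i, i) ^ Suc k else 0)"
    using Suc.prems X i by (auto simp: diagonal_mat_def mult.commute)
  finally show ?case .
qed (use X i in auto)

lemma norm_pow_mat_entry_le:
  fixes A :: "'a::real_normed_field mat"
  assumes A: "A \<in> carrier_mat d d" and i: "i < d" and j: "j < d"
  shows "norm ((A ^\<^sub>m k) $$ (i, j)) \<le> (\<Sum>a<d. \<Sum>b<d. norm (A $$ (a, b))) ^ k"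
  using i j
proof (induction k arbitrary: i j)
  case 0 then show ?case using A by auto
next
  case (Suc k)
  let ?M = "\<Sum>a<d. \<Sum>b<d. norm (A $$ (a, b))"
  have "(A ^\<^sub>m Suc k) $$ (i, j) = (\<Sum>l<d. (A ^\<^sub>m k) $$ (i, l) * A $$ (l, j))"
    using A Suc.prems by (simp add: index_mult_mat_sum[of _ d d] del: index_mult_mat)
  then have "norm ((A ^\<^sub>m Suc k) $$ (i, j)) \<le> (\<Sum>l<d. norm ((A ^\<^sub>m k) $$ (i, l)) * norm (A $$ (l, j)))"
    by (simp add: norm_mult[symmetric] sum_norm_le)
  also have "\<dots> \<le> (\<Sum>l<d. ?M ^ k * norm (A $$ (l, j)))"
    using Suc by (intro sum_mono mult_right_mono) auto
  also have "\<dots> = ?M ^ k * (\<Sum>l<d. norm (A $$ (l, j)))"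
    by (simp add: sum_distrib_left)
  also have "\<dots> \<le> ?M ^ k * ?M"
    using Suc.prems by (intro mult_left_mono sum_mono member_le_sum[where f = "\<lambda>b. norm (A $$ (_, b))"])
      (auto intro!: sum_nonneg zero_le_power)
  finally show ?case by (simp add: mult.commute)
qed

lemma mexp_carrier: "A \<in> carrier_mat d d \<Longrightarrow> mexp A \<in> carrier_mat d d"
  by (simp add: mexp_def)

lemma mexp_entry_sums:
  assumes A: "A \<in> carrier_mat d d" and i: "i < d" and j: "j < d"
  shows "(\<lambda>k. (A ^\<^sub>m k) $$ (i, j) / of_nat (fact k)) sums mexp A $$ (i, j)"
proof -
  let ?M = "\<Sum>a<d. \<Sum>b<d. norm (A $$ (a, b))"
  have "summable (\<lambda>k. ?M ^ k / fact k)"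
    using summable_exp[of ?M] by (simp add: field_simps)
  then have "summable (\<lambda>k. (A ^\<^sub>m k) $$ (i, j) / of_nat (fact k))"
    by (rule summable_comparison_test'[where N = 0])
      (simp add: norm_divide divide_right_mono norm_pow_mat_entry_le[OF A i j])
  then show ?thesis
    using A i j by (simp add: mexp_def summable_sums)
qed

lemma mexp_similar:
  assumes "similar_mat_wit A B P Q"
  shows "similar_mat_wit (mexp A) (mexp B) P Q"
proof -
  obtain d where A: "A \<in> carrier_mat d d" and B: "B \<in> carrier_mat d d"
    and P: "P \<in> carrier_mat d d" and Q: "Q \<in> carrier_mat d d"
    using similar_mat_witD[OF refl assms] by blast
  show ?thesis
  proof (rule similar_mat_wit_entrywise[OF assms A mexp_carrier[OF A] mexp_carrier[OF B]])
    fix i j assume i: "i < d" and j: "j < d"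
    have "(\<lambda>k. (\<Sum>a<d. \<Sum>b<d. P $$ (i, a) * ((B ^\<^sub>m k) $$ (a, b) / of_nat (fact k)) * Q $$ (b, j)))
        sums (\<Sum>a<d. \<Sum>b<d. P $$ (i, a) * mexp B $$ (a, b) * Q $$ (b, j))"
      by (intro sums_sum sums_mult sums_mult2 mexp_entry_sums[OF B]) auto
    moreover have "(\<Sum>a<d. \<Sum>b<d. P $$ (i, a) * ((B ^\<^sub>m k) $$ (a, b) / of_nat (fact k)) * Q $$ (b, j))
        = (A ^\<^sub>m k) $$ (i, j) / of_nat (fact k)" for k
      unfolding similar_mat_wit_pow_id[OF assms] index_mult_mat3_sum[OF P pow_carrier_mat[OF B] Q i j]
      by (simp add: sum_divide_distrib)
    ultimately show "mexp A $$ (i, j) = (\<Sum>a<d. \<Sum>b<d. P $$ (i, a) * mexp B $$ (a, b) * Q $$ (b, j))"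
      using mexp_entry_sums[OF A i j] sums_unique2 by auto
  qed
qed

lemma mexp_diagonal_entry:
  assumes X: "X \<in> carrier_mat d d" "diagonal_mat X" and i: "i < d" and j: "j < d"
  shows "mexp X $$ (i, j) = (if i = j then exp (X $$ (i, i)) else 0)"
proof -
  have "(\<lambda>k. (if i = j then X $$ (i, i) ^ k else 0) / of_nat (fact k)) sums mexp X $$ (i, j)"
    using mexp_entry_sums[OF X(1) i j] by (simp add: diagonal_mat_pow_entry[OF X i j])
  moreover have "(\<lambda>k. X $$ (i, i) ^ k / of_nat (fact k)) sums exp (X $$ (i, i))"
    using exp_converges[of "X $$ (i, i)"] by (simp add: scaleR_conv_of_real divide_inverse mult.commute)
  ultimately show ?thesis
    using sums_unique2 by (cases "i = j") auto
qed

lemma mexp_diagonal: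
  assumes "X \<in> carrier_mat d d" "diagonal_mat X"
  shows "diagonal_mat (mexp X)"
  using assms mexp_diagonal_entry by (auto simp: diagonal_mat_def mexp_def)

definition poly_mat :: "'a::comm_semiring_1 poly \<Rightarrow> 'a mat \<Rightarrow> 'a mat" where
  "poly_mat p A = mat (dim_row A) (dim_col A) (\<lambda>(i, j). \<Sum>k\<le>degree p. coeff p k * (A ^\<^sub>m k) $$ (i, j))"

lemma poly_mat_carrier: "A \<in> carrier_mat d d \<Longrightarrow> poly_mat p A \<in> carrier_mat d d"
  by (simp add: poly_mat_def)

lemma poly_mat_similar:
  assumes "similar_mat_wit A B P Q"
  shows "similar_mat_wit (poly_mat p A) (poly_mat p B) P Q"
proof -
  obtain d where A: "A \<in> carrier_mat d d" and B: "B \<in> carrier_mat d d"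
    and P: "P \<in> carrier_mat d d" and Q: "Q \<in> carrier_mat d d"
    using similar_mat_witD[OF refl assms] by blast
  show ?thesis
  proof (rule similar_mat_wit_entrywise[OF assms A poly_mat_carrier[OF A] poly_mat_carrier[OF B]])
    fix i j assume i: "i < d" and j: "j < d"
    have "poly_mat p A $$ (i, j)
        = (\<Sum>k\<le>degree p. coeff p k * (\<Sum>a<d. \<Sum>b<d. P $$ (i, a) * (B ^\<^sub>m k) $$ (a, b) * Q $$ (b, j)))"
      using A i j by (simp add: poly_mat_def similar_mat_wit_pow_id[OF assms]
          index_mult_mat3_sum[OF P pow_carrier_mat[OF B] Q i j] del: index_mult_mat)
    also have "\<dots> = (\<Sum>a<d. \<Sum>b<d. P $$ (i, a) * poly_mat p B $$ (a, b) * Q $$ (b, j))"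
      using B by (simp add: poly_mat_def sum_distrib_left sum_distrib_right
          sum.swap[of _ "{..degree p}"] mult_ac)
    finally show "poly_mat p A $$ (i, j) = (\<Sum>a<d. \<Sum>b<d. P $$ (i, a) * poly_mat p B $$ (a, b) * Q $$ (b, j))" .
  qed
qed

lemma poly_mat_diagonal_entry:
  assumes X: "X \<in> carrier_mat d d" "diagonal_mat X" and i: "i < d" and j: "j < d"
  shows "poly_mat p X $$ (i, j) = (if i = j then poly p (X $$ (i, i)) else 0)"
  using X i j by (simp add: poly_mat_def diagonal_mat_pow_entry poly_altdef)

lemma poly_interpolation:
  fixes Z :: "'a::field set"
  assumes "finite Z"
  shows "\<exists>p. \<forall>z\<in>Z. poly p z = f z"
  using assms
proof (induction Z rule: finite_induct)
  case (insert z Z)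
  then obtain q where q: "\<forall>w\<in>Z. poly q w = f w" by blast
  define L where "L = (\<Prod>w\<in>Z. [:- w, 1:])"
  have "poly L w = 0" if "w \<in> Z" for w
    unfolding L_def poly_prod using insert(1) that by (auto intro: prod_zero)
  moreover have "poly L z \<noteq> 0"
    unfolding L_def poly_prod using insert(1,2) by (auto simp: prod_zero_iff)
  ultimately have "\<forall>w\<in>insert z Z. poly (q + Polynomial.smult ((f z - poly q z) / poly L z) L) w = f w"
    using q by auto
  then show ?case by blast
qed simp

section \<open>Hermitian matrices\<close>

lemma hermitian_cnj_entry:
  "A \<in> carrier_mat d d \<Longrightarrow> is_hermitian A \<Longrightarrow> i < d \<Longrightarrow> j < d \<Longrightarrow>
    cnj (A $$ (j, i)) = A $$ (i, j)"
  unfolding is_hermitian_def by (metis carrier_matD(1) complex_cnj_cnj)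

lemma hermitian_cscalar_prod:
  assumes W: "W \<in> carrier_mat d d" "is_hermitian W" and x: "x \<in> carrier_vec d" and y: "y \<in> carrier_vec d"
  shows "(W *\<^sub>v x) \<bullet>c y = x \<bullet>c (W *\<^sub>v y)"
proof -
  have "(W *\<^sub>v x) \<bullet>c y = (\<Sum>i<d. \<Sum>j<d. W $$ (i, j) * x $ j * cnj (y $ i))"
    using W x y by (simp add: scalar_prod_def atLeast0LessThan index_mult_mat_vec_sum sum_distrib_right
        del: index_mult_mat_vec)
  also have "\<dots> = (\<Sum>j<d. \<Sum>i<d. W $$ (i, j) * x $ j * cnj (y $ i))"
    by (rule sum.swap)
  also have "\<dots> = (\<Sum>j<d. x $ j * cnj (\<Sum>i<d. W $$ (j, i) * y $ i))"
    using W by (simp add: sum_distrib_left hermitian_cnj_entry mult_ac)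
  also have "\<dots> = x \<bullet>c (W *\<^sub>v y)"
    using W x y by (auto simp: scalar_prod_def atLeast0LessThan index_mult_mat_vec_sum
        simp del: index_mult_mat_vec intro!: sum.cong)
  finally show ?thesis .
qed

lemma hermitian_eigenvalue_real:
  assumes W: "W \<in> carrier_mat d d" "is_hermitian W" and ev: "eigenvector W v a"
  shows "a \<in> \<real>"
proof -
  have v: "v \<in> carrier_vec d" "v \<noteq> 0\<^sub>v d" and Wv: "W *\<^sub>v v = a \<cdot>\<^sub>v v"
    using ev W by (auto simp: eigenvector_def)
  have "a * (v \<bullet>c v) = cnj a * (v \<bullet>c v)"
    using hermitian_cscalar_prod[OF W v(1) v(1)] v(1)
    by (simp add: Wv conjugate_smult_vec)
  moreover have "v \<bullet>c v \<noteq> 0"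
    using v by simp
  ultimately show ?thesis
    by (simp add: Reals_cnj_iff)
qed

lemma char_matrix_mult_vec:
  assumes A: "A \<in> carrier_mat d d" and v: "v \<in> carrier_vec d"
  shows "char_matrix A a *\<^sub>v v = A *\<^sub>v v - a \<cdot>\<^sub>v v"
proof (rule eq_vecI)
  fix i assume "i < dim_vec (A *\<^sub>v v - a \<cdot>\<^sub>v v)"
  then have i: "i < d" using A v by simp
  have "(char_matrix A a *\<^sub>v v) $ i = (\<Sum>j<d. char_matrix A a $$ (i, j) * v $ j)"
    by (rule index_mult_mat_vec_sum[OF char_matrix_closed[OF A] v i])
  also have "\<dots> = (\<Sum>j<d. A $$ (i, j) * v $ j + (if j = i then - a * v $ i else 0))"
    using A i by (intro sum.cong refl) (auto simp: char_matrix_def algebra_simps)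
  also have "\<dots> = (\<Sum>j<d. A $$ (i, j) * v $ j) - a * v $ i"
    using i by (simp add: sum.distrib)
  also have "\<dots> = (A *\<^sub>v v - a \<cdot>\<^sub>v v) $ i"
    using A v i by (simp add: index_mult_mat_vec_sum[OF A v i] del: index_mult_mat_vec)
  finally show "(char_matrix A a *\<^sub>v v) $ i = (A *\<^sub>v v - a \<cdot>\<^sub>v v) $ i" .
qed (use A v carrier_matD[OF char_matrix_closed[OF A]] in simp)

lemma hermitian_char_matrix_kernel_sq:
  assumes W: "W \<in> carrier_mat d d" "is_hermitian W" and v: "v \<in> carrier_vec d"
    and sq: "char_matrix W a *\<^sub>v (char_matrix W a *\<^sub>v v) = 0\<^sub>v d"
  shows "char_matrix W a *\<^sub>v v = 0\<^sub>v d"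
proof (rule ccontr)
  define w where "w = char_matrix W a *\<^sub>v v"
  have w: "w \<in> carrier_vec d" unfolding w_def by (rule mult_mat_vec_carrier[OF char_matrix_closed[OF W(1)] v])
  assume "char_matrix W a *\<^sub>v v \<noteq> 0\<^sub>v d"
  then have "eigenvector W w a"
    using eigenvector_char_matrix[OF W(1)] w sq by (simp add: w_def)
  then have "cnj a = a"
    using hermitian_eigenvalue_real[OF W] Reals_cnj_iff by blast
  have Ww: "W *\<^sub>v w = a \<cdot>\<^sub>v w"
    using \<open>eigenvector W w a\<close> by (simp add: eigenvector_def)
  have "w \<bullet>c w = (W *\<^sub>v v) \<bullet>c w - a * (v \<bullet>c w)"
    unfolding w_def char_matrix_mult_vec[OF W(1) v] using W v w
    by (simp add: minus_scalar_prod_distrib[of _ d])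
  also have "\<dots> = 0"
    using W v w \<open>cnj a = a\<close> by (simp add: hermitian_cscalar_prod[OF W v w] Ww conjugate_smult_vec)
  finally have "w = 0\<^sub>v d"
    using w by simp
  with \<open>eigenvector W w a\<close> show False
    using W by (simp add: eigenvector_def)
qed

lemma sum_list_map_eq_imp_eq:
  fixes f g :: "'a \<Rightarrow> nat"
  assumes "sum_list (map f xs) = sum_list (map g xs)" "x \<in> set xs" "\<And>x. g x \<le> f x"
  shows "f x = g x"
  using assms
proof (induction xs)
  case (Cons y xs)
  have "sum_list (map g xs) \<le> sum_list (map f xs)"
    using Cons.prems(3) by (intro sum_list_mono)
  then have "f y = g y" "sum_list (map f xs) = sum_list (map g xs)"
    using Cons.prems(1) Cons.prems(3)[of y] by auto
  then show ?case using Cons by auto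
qed simp

lemma jordan_matrix_diagonal:
  assumes "\<forall>p\<in>set n_as. fst p = 1"
  shows "diagonal_mat (jordan_matrix n_as)"
proof -
  have "map (\<lambda>(n, a). jordan_block n a) n_as = map (\<lambda>a. mat (Suc 0) (Suc 0) (\<lambda>_. a)) (map snd n_as)"
    using assms by (auto intro!: eq_matI)
  then show ?thesis
    unfolding jordan_matrix_def by (metis mk_diagonal_def mk_diagonal_diagonal)
qed

lemma hermitian_dim_gen_eigenspace_2:
  assumes W: "W \<in> carrier_mat d d" "is_hermitian W"
  shows "dim_gen_eigenspace W ev 2 = dim_gen_eigenspace W ev 1"
proof -
  have B: "char_matrix W ev \<in> carrier_mat d d" using W by simp
  have "char_matrix W ev *\<^sub>v (char_matrix W ev *\<^sub>v v) = 0\<^sub>v d \<longleftrightarrow>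
      char_matrix W ev *\<^sub>v v = 0\<^sub>v d"
    if "v \<in> carrier_vec d" for v
    using hermitian_char_matrix_kernel_sq[OF W that] B by auto
  then have "mat_kernel (char_matrix W ev ^\<^sub>m 2) = mat_kernel (char_matrix W ev ^\<^sub>m 1)"
    using B by (auto simp: mat_kernel_def numeral_2_eq_2 assoc_mult_mat_vec[OF B B])
  then show ?thesis
    using W by (simp add: dim_gen_eigenspace_def kernel_dim_def)
qed

lemma hermitian_jordan_blocks_trivial:
  assumes W: "W \<in> carrier_mat d d" "is_hermitian W" and jnf: "jordan_nf W n_as"
  shows "\<forall>p\<in>set n_as. fst p = 1"
proof -
  have "min 2 n = min 1 n" if "(n, ev) \<in> set n_as" for n ev
  proof -
    let ?ns = "map fst (filter (\<lambda>(n, e). e = ev) n_as)"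
    have "sum_list (map (min 2) ?ns) = sum_list (map (min 1) ?ns)"
      using hermitian_dim_gen_eigenspace_2[OF W, of ev] by (simp add: dim_gen_eigenspace[OF jnf])
    moreover have "n \<in> set ?ns"
      using that by force
    ultimately show ?thesis
      by (rule sum_list_map_eq_imp_eq) simp
  qed
  moreover have "0 \<notin> fst ` set n_as"
    using jnf by (simp add: jordan_nf_def)
  ultimately show ?thesis
    by (force simp: min_def split: if_splits)
qed

lemma hermitian_diagonalizable:
  assumes W: "W \<in> carrier_mat d d" "is_hermitian W"
  shows "\<exists>J P Q. similar_mat_wit W J P Q \<and> diagonal_mat J"
proof -
  obtain n_as where jnf: "jordan_nf W n_as"
    using char_poly_factorized[OF W(1)] jordan_nf_exists[OF W(1)] by blast
  then obtain P Q where "similar_mat_wit W (jordan_matrix n_as) P Q"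
    by (auto simp: jordan_nf_def similar_mat_def)
  then show ?thesis
    using jordan_matrix_diagonal hermitian_jordan_blocks_trivial[OF W jnf] by blast
qed

lemma similar_diagonal_eigenvector:
  assumes wit: "similar_mat_wit W J P Q" and J: "diagonal_mat J"
    and W: "W \<in> carrier_mat d d" and a: "a < d"
  shows "eigenvector W (col P a) (J $$ (a, a))"
proof -
  note c = similar_mat_witD2[OF W wit]
  have WP: "W * P = P * J"
    using c by (simp add: assoc_mult_mat[of _ d d _ d _ d])
  have "W *\<^sub>v col P a = col (P * J) a"
    using c a by (simp flip: WP)
  also have "\<dots> = J $$ (a, a) \<cdot>\<^sub>v col P a"
  proof (rule eq_vecI)
    fix i assume "i < dim_vec (J $$ (a, a) \<cdot>\<^sub>v col P a)"
    then have i: "i < d" using c by simp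
    have "col (P * J) a $ i = (P * J) $$ (i, a)"
      using c i a by simp
    also have "\<dots> = (\<Sum>l<d. P $$ (i, l) * J $$ (l, a))"
      by (rule index_mult_mat_sum[OF c(6) c(5) i a])
    also have "\<dots> = P $$ (i, a) * J $$ (a, a)"
      using J c a by (subst sum.remove[of _ a]) (auto simp: diagonal_mat_def intro!: sum.neutral)
    finally show "col (P * J) a $ i = (J $$ (a, a) \<cdot>\<^sub>v col P a) $ i"
      using c i a by simp
  qed (use c in simp)
  finally have eig: "W *\<^sub>v col P a = J $$ (a, a) \<cdot>\<^sub>v col P a" .
  have "col P a \<noteq> 0\<^sub>v d"
  proof
    assume "col P a = 0\<^sub>v d"
    then have "row Q a \<bullet> col P a = 0"
      by (simp add: scalar_prod_def)
    moreover have "row Q a \<bullet> col P a = (Q * P) $$ (a, a)"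
      using c a by (intro index_mult_mat(1)[symmetric]) auto
    ultimately show False
      using c a by simp
  qed
  moreover have "col P a \<in> carrier_vec d"
    using c(6) by (metis carrier_matD(1) col_dim)
  ultimately show ?thesis
    using eig W by (simp add: eigenvector_def)
qed

lemma vnorm_smult: "vnorm (c \<cdot>\<^sub>v x) = cmod c * vnorm x"
proof -
  have "(\<Sum>i<dim_vec x. (cmod ((c \<cdot>\<^sub>v x) $ i))^2) = (cmod c)^2 * (\<Sum>i<dim_vec x. (cmod (x $ i))^2)"
    by (simp add: sum_distrib_left norm_mult power_mult_distrib)
  then show ?thesis unfolding vnorm_def by (simp add: real_sqrt_mult)
qed

lemma vnorm_pos: assumes "x \<in> carrier_vec d" "x \<noteq> 0\<^sub>v d" shows "vnorm x > 0"
proof -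
  obtain i where i: "i < d" "x $ i \<noteq> 0" using assms by (metis carrier_vecD eq_vecI index_zero_vec)
  have "0 < (cmod (x $ i))^2" using i by simp
  also have "\<dots> \<le> (\<Sum>i<dim_vec x. (cmod (x $ i))^2)"
    using i assms by (intro member_le_sum) auto
  finally show ?thesis unfolding vnorm_def by simp
qed

lemma norm_le_vnorm: "i < dim_vec x \<Longrightarrow> cmod (x $ i) \<le> vnorm x"
proof -
  assume i: "i < dim_vec x"
  have "(cmod (x $ i))^2 \<le> (\<Sum>i<dim_vec x. (cmod (x $ i))^2)"
    using i by (intro member_le_sum) auto
  then have "sqrt ((cmod (x $ i))^2) \<le> vnorm x" unfolding vnorm_def by (rule real_sqrt_le_mono)
  then show ?thesis by simp
qed

lemma bdd_above_op_norm:
  assumes W: "W \<in> carrier_mat d d"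
  shows "bdd_above {vnorm (W *\<^sub>v x) | x. x \<in> carrier_vec (dim_col W) \<and> vnorm x \<le> 1}"
proof -
  let ?M = "\<Sum>a<d. \<Sum>b<d. cmod (W $$ (a, b))"
  have "vnorm (W *\<^sub>v x) \<le> sqrt (d * ?M^2)" if x: "x \<in> carrier_vec d" and n: "vnorm x \<le> 1" for x
  proof -
    have "cmod ((W *\<^sub>v x) $ i) \<le> ?M" if i: "i < d" for i
    proof -
      have "cmod ((W *\<^sub>v x) $ i) \<le> (\<Sum>j<d. cmod (W $$ (i, j)) * cmod (x $ j))"
        unfolding index_mult_mat_vec_sum[OF W x i] by (simp add: norm_mult[symmetric] sum_norm_le)
      also have "\<dots> \<le> (\<Sum>j<d. cmod (W $$ (i, j)))"
      proof (rule sum_mono)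
        fix j assume "j \<in> {..<d}"
        then have "cmod (x $ j) \<le> 1" using norm_le_vnorm[of j x] x n by auto
        then show "cmod (W $$ (i, j)) * cmod (x $ j) \<le> cmod (W $$ (i, j))"
          by (simp add: mult_left_le)
      qed
      also have "\<dots> \<le> ?M"
        using i by (intro member_le_sum[where f = "\<lambda>a. \<Sum>b<d. cmod (W $$ (a, b))"]) (auto intro: sum_nonneg)
      finally show ?thesis .
    qed
    then have "(\<Sum>i<d. (cmod ((W *\<^sub>v x) $ i))^2) \<le> (\<Sum>i<d. ?M^2)"
      by (intro sum_mono power_mono) auto
    then show ?thesis unfolding vnorm_def using W by (simp add: real_sqrt_le_mono)
  qed
  then show ?thesis using W unfolding bdd_above_def by auto
qed

lemma eigenvalue_norm_le_op_norm:
  assumes W: "W \<in> carrier_mat d d" and ev: "eigenvector W x a"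
  shows "cmod a \<le> op_norm W"
proof -
  have x: "x \<in> carrier_vec d" "x \<noteq> 0\<^sub>v d" and e: "W *\<^sub>v x = a \<cdot>\<^sub>v x"
    using ev W by (auto simp: eigenvector_def)
  define y where "y = (1 / vnorm x) \<cdot>\<^sub>v x"
  have pos: "vnorm x > 0" by (rule vnorm_pos[OF x])
  have y: "y \<in> carrier_vec (dim_col W)" using x W unfolding y_def by simp
  have ny: "vnorm y = 1" unfolding y_def vnorm_smult using pos by (simp add: norm_divide)
  have "W *\<^sub>v y = a \<cdot>\<^sub>v y"
    unfolding y_def using W x e by (simp add: mult_mat_vec smult_smult_assoc mult.commute)
  then have "vnorm (W *\<^sub>v y) = cmod a" using ny by (simp add: vnorm_smult)
  then have "cmod a \<in> {vnorm (W *\<^sub>v x) | x. x \<in> carrier_vec (dim_col W) \<and> vnorm x \<le> 1}"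
    using y ny by (metis (mono_tags, lifting) mem_Collect_eq order_refl)
  then show ?thesis unfolding op_norm_def by (rule cSup_upper[OF _ bdd_above_op_norm[OF W]])
qed

lemma inj_on_exp_minus_i: "inj_on (\<lambda>z. exp (- \<i> * z)) {z \<in> \<real>. cmod z < pi}"
proof (rule inj_onI)
  fix x y assume x: "x \<in> {z \<in> \<real>. cmod z < pi}" and y: "y \<in> {z \<in> \<real>. cmod z < pi}"
    and "exp (- \<i> * x) = exp (- \<i> * y)"
  then obtain n :: int where "- \<i> * x = - \<i> * y + of_int (2 * n) * pi * \<i>"
    unfolding exp_eq by blast
  then have xy: "Re y - Re x = 2 * n * pi"
    using x y by (auto simp: complex_eq_iff elim!: Reals_cases)
  have "\<bar>Re y - Re x\<bar> < 2 * pi"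
    using x y abs_Re_le_cmod[of x] abs_Re_le_cmod[of y] by auto
  then have "\<bar>real_of_int n\<bar> < 1"
    unfolding xy by (simp add: abs_mult)
  then have "n = 0" by linarith
  then show "x = y"
    using xy x y by (auto simp: complex_eq_iff elim!: Reals_cases)
qed

lemma diagonal_eq_poly_mat_mexp:
  assumes J: "J \<in> carrier_mat d d" "diagonal_mat J"
    and inj: "inj_on (\<lambda>z. exp (c * z)) ((\<lambda>a. J $$ (a, a)) ` {..<d})"
  shows "\<exists>p. poly_mat p (mexp (c \<cdot>\<^sub>m J)) = J"
proof -
  let ?f = "\<lambda>z. exp (c * z)" and ?\<Lambda> = "(\<lambda>a. J $$ (a, a)) ` {..<d}"
  obtain p where p: "\<forall>z\<in>?f ` ?\<Lambda>. poly p z = the_inv_into ?\<Lambda> ?f z"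
    using poly_interpolation[of "?f ` ?\<Lambda>"] by blast
  have cJ: "c \<cdot>\<^sub>m J \<in> carrier_mat d d" "diagonal_mat (c \<cdot>\<^sub>m J)"
    using J by (auto simp: diagonal_mat_def)
  have E: "mexp (c \<cdot>\<^sub>m J) \<in> carrier_mat d d" "diagonal_mat (mexp (c \<cdot>\<^sub>m J))"
    using cJ by (simp_all add: mexp_carrier mexp_diagonal)
  have "poly_mat p (mexp (c \<cdot>\<^sub>m J)) = J"
  proof (rule eq_matI)
    fix i j assume "i < dim_row J" "j < dim_col J"
    then have i: "i < d" and j: "j < d" using J by auto
    have "poly p (mexp (c \<cdot>\<^sub>m J) $$ (i, i)) = J $$ (i, i)"
      using i J(1) p the_inv_into_f_f[OF inj] by (simp add: mexp_diagonal_entry[OF cJ i i])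
    then show "poly_mat p (mexp (c \<cdot>\<^sub>m J)) $$ (i, j) = J $$ (i, j)"
      using J E i j by (auto simp: poly_mat_diagonal_entry diagonal_mat_def)
  qed (use J E in \<open>simp_all add: poly_mat_def\<close>)
  then show ?thesis ..
qed

lemma hermitian_eq_poly_mat_mexp:
  assumes W: "W \<in> carrier_mat d d" "is_hermitian W" and norm: "op_norm W < pi"
  shows "\<exists>p. W = poly_mat p (mexp ((- \<i>) \<cdot>\<^sub>m W))"
proof -
  obtain J P Q where wit: "similar_mat_wit W J P Q" and J: "diagonal_mat J"
    using hermitian_diagonalizable[OF W] by blast
  note c = similar_mat_witD2[OF W(1) wit]
  have "J $$ (a, a) \<in> \<real> \<and> cmod (J $$ (a, a)) < pi" if "a < d" for a
  proof -
    have ev: "eigenvector W (col P a) (J $$ (a, a))"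
      by (rule similar_diagonal_eigenvector[OF wit J W(1) that])
    show ?thesis
      using hermitian_eigenvalue_real[OF W ev] eigenvalue_norm_le_op_norm[OF W(1) ev] norm by simp
  qed
  then have "(\<lambda>a. J $$ (a, a)) ` {..<d} \<subseteq> {z \<in> \<real>. cmod z < pi}"
    by auto
  then obtain p where "poly_mat p (mexp ((- \<i>) \<cdot>\<^sub>m J)) = J"
    using diagonal_eq_poly_mat_mexp[OF c(5) J] inj_on_subset[OF inj_on_exp_minus_i] by blast
  moreover have "similar_mat_wit (mexp ((- \<i>) \<cdot>\<^sub>m W)) (mexp ((- \<i>) \<cdot>\<^sub>m J)) P Q"
    by (intro mexp_similar similar_mat_wit_smult wit)
  ultimately have "similar_mat_wit (poly_mat p (mexp ((- \<i>) \<cdot>\<^sub>m W))) J P Q"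
    using poly_mat_similar by metis
  then have "poly_mat p (mexp ((- \<i>) \<cdot>\<^sub>m W)) = P * J * Q"
    by (rule similar_mat_witD(3)[OF refl])
  with c(3) show ?thesis by metis
qed

section \<open>Pauli operators\<close>

abbreviation qbit :: "nat \<Rightarrow> nat \<Rightarrow> nat" where
  "qbit i k \<equiv> i div 2 ^ k mod 2"

lemma sum_lessThan_double:
  fixes f :: "nat \<Rightarrow> 'a::comm_monoid_add"
  shows "(\<Sum>l<2 * m. f l) = (\<Sum>l<m. f (2 * l) + f (2 * l + 1))"
proof (induction m)
  case (Suc m)
  have "{..<2 * Suc m} = insert (2 * m + 1) (insert (2 * m) {..<2 * m})" by auto
  then show ?case using Suc by (simp add: ac_simps)
qed simp

lemma qbit_double_add_Suc: "b < 2 \<Longrightarrow> qbit (2 * l + b) (Suc k) = qbit l k"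
  by (simp add: div_mult2_eq)

lemma sum_qbits_prod:
  fixes g :: "nat \<Rightarrow> nat \<Rightarrow> 'a::comm_semiring_1"
  shows "(\<Sum>l<2 ^ n. \<Prod>k<n. g k (qbit l k)) = (\<Prod>k<n. \<Sum>c<2. g k c)"
proof (induction n arbitrary: g)
  case (Suc n)
  have split: "(\<Prod>k<Suc n. g k (qbit (2 * l + b) k)) = g 0 b * (\<Prod>k<n. g (Suc k) (qbit l k))"
    if "b < 2" for l b :: nat
    using that unfolding prod.lessThan_Suc_shift by (simp add: qbit_double_add_Suc[simplified] del: prod.lessThan_Suc)
  have "(\<Sum>l<2 ^ Suc n. \<Prod>k<Suc n. g k (qbit l k))
      = (\<Sum>l<2 ^ n. (\<Prod>k<Suc n. g k (qbit (2 * l + 0) k)) + (\<Prod>k<Suc n. g k (qbit (2 * l + 1) k)))"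
    by (simp add: sum_lessThan_double)
  also have "\<dots> = (\<Sum>l<2 ^ n. (g 0 0 + g 0 1) * (\<Prod>k<n. g (Suc k) (qbit l k)))"
    by (subst split, simp, subst split, simp, simp add: algebra_simps)
  also have "\<dots> = (\<Sum>c<2. g 0 c) * (\<Prod>k<n. \<Sum>c<2. g (Suc k) c)"
    by (simp only: sum_distrib_left[symmetric] Suc.IH[of "\<lambda>k. g (Suc k)"]) (simp add: numeral_2_eq_2)
  also have "\<dots> = (\<Prod>k<Suc n. \<Sum>c<2. g k c)"
    unfolding prod.lessThan_Suc_shift by simp
  finally show ?case .
qed simp

lemma eq_if_qbits_eq:
  "a < 2 ^ n \<Longrightarrow> b < 2 ^ n \<Longrightarrow> (\<forall>k<n. qbit a k = qbit b k) \<Longrightarrow> a = b"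
proof (induction n arbitrary: a b)
  case (Suc n)
  have "a mod 2 = b mod 2" using Suc.prems(3)[rule_format, of 0] by simp
  moreover have "a div 2 = b div 2"
    using Suc.prems by (intro Suc.IH) (auto simp: div_mult2_eq)
  ultimately show ?case by (metis div_mult_mod_eq)
qed simp

lemma prod_if_const: "(\<Prod>k<n. if P k then c else 0) = (if \<forall>k<n. P k then c ^ n else (0::'a::comm_semiring_1))"
  by (induction n) (auto simp: less_Suc_eq mult.commute)

lemma le_3_cases: "(a::nat) \<le> 3 \<longleftrightarrow> a = 0 \<or> a = 1 \<or> a = 2 \<or> a = 3" by auto

lemma xor_le_3: "(a::nat) \<le> 3 \<Longrightarrow> b \<le> 3 \<Longrightarrow> a XOR b \<le> 3"
  unfolding le_3_cases by auto

lemma xor_eq_0_iff_nat: "(a::nat) XOR b = 0 \<longleftrightarrow> a = b"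
  by (auto simp: bit_eq_iff bit_xor_iff)

definition pauli1_phase :: "nat \<Rightarrow> nat \<Rightarrow> complex" where
  "pauli1_phase a b = (if a = 0 \<or> b = 0 \<or> a = b then 1
     else if (a, b) \<in> {(1, 2), (2, 3), (3, 1)} then \<i> else -\<i>)"

lemma pauli1_carrier [simp]: "pauli1 a \<in> carrier_mat 2 2"
  by (simp add: pauli1_def mat_of_rows_list_def numeral_2_eq_2)

lemma pauli1_dim [simp]: "dim_row (pauli1 a) = 2" "dim_col (pauli1 a) = 2"
  using pauli1_carrier by blast+

lemma pauli1_mult:
  assumes "a \<le> 3" "b \<le> 3"
  shows "pauli1 a * pauli1 b = pauli1_phase a b \<cdot>\<^sub>m pauli1 (a XOR b)"
proof (rule eq_matI)
  fix x y assume "x < dim_row (pauli1_phase a b \<cdot>\<^sub>m pauli1 (a XOR b))"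
    and "y < dim_col (pauli1_phase a b \<cdot>\<^sub>m pauli1 (a XOR b))"
  then have "x < 2" "y < 2" by simp_all
  then show "(pauli1 a * pauli1 b) $$ (x, y) = (pauli1_phase a b \<cdot>\<^sub>m pauli1 (a XOR b)) $$ (x, y)"
    using assms unfolding le_3_cases less_2_cases_iff
    by (elim disjE) (simp_all add: pauli1_def pauli1_phase_def mat_of_rows_list_def scalar_prod_def)
qed simp_all

lemma pauli1_trace: "a \<le> 3 \<Longrightarrow> (\<Sum>c<2. pauli1 a $$ (c, c)) = (if a = 0 then 2 else 0)"
  unfolding le_3_cases by (elim disjE) (simp_all add: pauli1_def mat_of_rows_list_def numeral_2_eq_2)

lemma pauli1_completeness:
  assumes "x < 2" "y < 2" "i < 2" "j < 2"
  shows "(\<Sum>c<4. pauli1 c $$ (x, y) * pauli1 c $$ (i, j)) = (if x = j \<and> y = i then 2 else 0)"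
  using assms unfolding less_2_cases_iff
  by (elim disjE) (simp_all add: pauli1_def mat_of_rows_list_def numeral_eq_Suc)

lemma pauli_strings_iff: "s \<in> pauli_strings n \<longleftrightarrow> length s = n \<and> (\<forall>k<n. s ! k \<le> 3)"
  unfolding pauli_strings_def by (auto simp: set_conv_nth)

lemma finite_pauli_strings: "finite (pauli_strings n)"
proof -
  have "pauli_strings n \<subseteq> {xs. set xs \<subseteq> {0..3} \<and> length xs = n}"
    by (auto simp: pauli_strings_def)
  then show ?thesis using finite_lists_length_eq[of "{0..3::nat}" n] finite_subset by blast
qed

lemma pauli_strings_Suc:
  "pauli_strings (Suc n) = (\<lambda>(s, c). s @ [c]) ` (pauli_strings n \<times> {..<4})"
proof (intro equalityI subsetI)
  fix x assume x: "x \<in> pauli_strings (Suc n)"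
  then obtain s c where "x = s @ [c]"
    by (cases x rule: rev_cases) (auto simp: pauli_strings_def)
  with x show "x \<in> (\<lambda>(s, c). s @ [c]) ` (pauli_strings n \<times> {..<4})"
    by (auto simp: pauli_strings_def)
qed (auto simp: pauli_strings_def subset_iff)

lemma sum_pauli_strings_prod:
  fixes f :: "nat \<Rightarrow> nat \<Rightarrow> 'a::comm_semiring_1"
  shows "(\<Sum>s\<in>pauli_strings n. \<Prod>k<n. f k (s ! k)) = (\<Prod>k<n. \<Sum>c<4. f k c)"
proof (induction n)
  case 0
  have "pauli_strings 0 = {[]}" by (auto simp: pauli_strings_def)
  then show ?case by simp
next
  case (Suc n)
  have inj: "inj_on (\<lambda>(s, c). s @ [c]) (pauli_strings n \<times> {..<4::nat})"
    by (auto simp: inj_on_def)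
  have snoc: "(\<Prod>k<Suc n. f k ((s @ [c]) ! k)) = (\<Prod>k<n. f k (s ! k)) * f n c"
    if "s \<in> pauli_strings n" for s c
    using that by (simp add: pauli_strings_iff nth_append)
  have "(\<Sum>s\<in>pauli_strings (Suc n). \<Prod>k<Suc n. f k (s ! k))
      = (\<Sum>(s, c)\<in>pauli_strings n \<times> {..<4}. (\<Prod>k<n. f k (s ! k)) * f n c)"
    unfolding pauli_strings_Suc sum.reindex[OF inj] by (intro sum.cong) (auto simp: snoc simp del: prod.lessThan_Suc)
  also have "\<dots> = (\<Sum>s\<in>pauli_strings n. \<Prod>k<n. f k (s ! k)) * (\<Sum>c<4. f n c)"
    by (simp add: sum_product sum.cartesian_product)
  finally show ?case using Suc by simp
qed

(* With the labelling 0 = I, 1 = X, 2 = Y, 3 = Z of pauli1, addition of labels in F_2^{2n} is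
   the qubitwise bitwise XOR. *)
definition pauli_xor :: "nat list \<Rightarrow> nat list \<Rightarrow> nat list" where
  "pauli_xor s t = map2 (XOR) s t"

lemma length_pauli_xor [simp]: "length (pauli_xor s t) = min (length s) (length t)"
  by (simp add: pauli_xor_def)

lemma nth_pauli_xor [simp]:
  "k < length s \<Longrightarrow> k < length t \<Longrightarrow> pauli_xor s t ! k = s ! k XOR t ! k"
  by (simp add: pauli_xor_def)

lemma pauli_xor_in_pauli_strings:
  "s \<in> pauli_strings n \<Longrightarrow> t \<in> pauli_strings n \<Longrightarrow> pauli_xor s t \<in> pauli_strings n"
  by (auto simp: pauli_strings_iff xor_le_3)

lemma pauli_xor_eq_identity_iff:
  "s \<in> pauli_strings n \<Longrightarrow> t \<in> pauli_strings n \<Longrightarrow>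
    pauli_xor s t = replicate n 0 \<longleftrightarrow> s = t"
  by (simp add: pauli_strings_iff list_eq_iff_nth_eq xor_eq_0_iff_nat)

lemma pauli_xor_commute: "pauli_xor s t = pauli_xor t s"
  by (simp add: pauli_xor_def list_eq_iff_nth_eq xor.commute)

lemma pauli_xor_assoc:
  "s \<in> pauli_strings n \<Longrightarrow> t \<in> pauli_strings n \<Longrightarrow> u \<in> pauli_strings n \<Longrightarrow>
    pauli_xor (pauli_xor s t) u = pauli_xor s (pauli_xor t u)"
  by (simp add: pauli_strings_iff list_eq_iff_nth_eq xor.assoc)

lemma pauli_xor_self: "s \<in> pauli_strings n \<Longrightarrow> pauli_xor s s = replicate n 0"
  by (simp add: pauli_strings_iff list_eq_iff_nth_eq)

lemma pauli_xor_identity: "s \<in> pauli_strings n \<Longrightarrow> pauli_xor (replicate n 0) s = s"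
  by (simp add: pauli_strings_iff list_eq_iff_nth_eq)

definition pauli_phase :: "nat \<Rightarrow> nat list \<Rightarrow> nat list \<Rightarrow> complex" where
  "pauli_phase n s t = (\<Prod>k<n. pauli1_phase (s ! k) (t ! k))"

lemma pauli_op_carrier [simp]: "pauli_op n s \<in> carrier_mat (2 ^ n) (2 ^ n)"
  by (simp add: pauli_op_def)

lemma pauli_op_dim [simp]: "dim_row (pauli_op n s) = 2 ^ n" "dim_col (pauli_op n s) = 2 ^ n"
  by (simp_all add: pauli_op_def)

lemma pauli_op_entry:
  "i < 2 ^ n \<Longrightarrow> j < 2 ^ n \<Longrightarrow> pauli_op n s $$ (i, j) = (\<Prod>k<n. pauli1 (s ! k) $$ (qbit i k, qbit j k))"
  by (simp add: pauli_op_def)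

lemma pauli_op_mult:
  assumes s: "s \<in> pauli_strings n" and t: "t \<in> pauli_strings n"
  shows "pauli_op n s * pauli_op n t = pauli_phase n s t \<cdot>\<^sub>m pauli_op n (pauli_xor s t)"
proof (rule eq_matI)
  fix i j assume "i < dim_row (pauli_phase n s t \<cdot>\<^sub>m pauli_op n (pauli_xor s t))"
    and "j < dim_col (pauli_phase n s t \<cdot>\<^sub>m pauli_op n (pauli_xor s t))"
  then have i: "i < 2 ^ n" and j: "j < 2 ^ n" by auto
  have "(pauli_op n s * pauli_op n t) $$ (i, j)
     = (\<Sum>l<2 ^ n. \<Prod>k<n. pauli1 (s ! k) $$ (qbit i k, qbit l k) * pauli1 (t ! k) $$ (qbit l k, qbit j k))"
    unfolding index_mult_mat_sum[OF pauli_op_carrier pauli_op_carrier i j]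
    using i j by (intro sum.cong refl) (simp add: pauli_op_entry prod.distrib)
  also have "\<dots> = (\<Prod>k<n. \<Sum>c<2. pauli1 (s ! k) $$ (qbit i k, c) * pauli1 (t ! k) $$ (c, qbit j k))"
    by (rule sum_qbits_prod)
  also have "\<dots> = (\<Prod>k<n. (pauli1 (s ! k) * pauli1 (t ! k)) $$ (qbit i k, qbit j k))"
    by (intro prod.cong refl) (simp add: index_mult_mat_sum[OF pauli1_carrier pauli1_carrier] del: index_mult_mat)
  also have "\<dots> = (\<Prod>k<n. pauli1_phase (s ! k) (t ! k) * pauli1 (s ! k XOR t ! k) $$ (qbit i k, qbit j k))"
    using s t by (intro prod.cong refl) (simp add: pauli1_mult pauli_strings_iff)
  also have "\<dots> = (pauli_phase n s t \<cdot>\<^sub>m pauli_op n (pauli_xor s t)) $$ (i, j)"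
    using s t i j by (simp add: prod.distrib pauli_phase_def pauli_op_entry pauli_strings_iff)
  finally show "(pauli_op n s * pauli_op n t) $$ (i, j) = (pauli_phase n s t \<cdot>\<^sub>m pauli_op n (pauli_xor s t)) $$ (i, j)" .
qed auto

lemma mtrace_pauli_op:
  assumes "s \<in> pauli_strings n"
  shows "mtrace (pauli_op n s) = (if s = replicate n 0 then 2 ^ n else 0)"
proof -
  have "mtrace (pauli_op n s) = (\<Sum>i<2 ^ n. \<Prod>k<n. pauli1 (s ! k) $$ (qbit i k, qbit i k))"
    by (simp add: mtrace_def pauli_op_entry)
  also have "\<dots> = (\<Prod>k<n. \<Sum>c<2. pauli1 (s ! k) $$ (c, c))"
    by (rule sum_qbits_prod)
  also have "\<dots> = (\<Prod>k<n. if s ! k = 0 then 2 else 0)"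
    using assms by (intro prod.cong refl) (simp add: pauli1_trace pauli_strings_iff)
  also have "\<dots> = (if s = replicate n 0 then 2 ^ n else 0)"
    using assms by (simp add: prod_if_const pauli_strings_iff list_eq_iff_nth_eq)
  finally show ?thesis .
qed

lemma pauli_coeff_pauli_op:
  assumes u: "u \<in> pauli_strings n" and t: "t \<in> pauli_strings n"
  shows "pauli_coeff n (pauli_op n t) u = (if u = t then 1 else 0)"
proof -
  have "mtrace (pauli_op n u * pauli_op n t) = pauli_phase n u t * mtrace (pauli_op n (pauli_xor u t))"
    by (simp add: pauli_op_mult[OF u t] mtrace_def sum_distrib_left)
  then show ?thesis
    using u t by (simp add: pauli_coeff_def mtrace_pauli_op pauli_xor_in_pauli_strings
        pauli_xor_eq_identity_iff pauli_phase_def pauli1_phase_def)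
qed

lemma pauli_coeff_eq_sum:
  assumes "A \<in> carrier_mat (2 ^ n) (2 ^ n)"
  shows "pauli_coeff n A u = (\<Sum>a<2 ^ n. \<Sum>b<2 ^ n. pauli_op n u $$ (a, b) * A $$ (b, a)) / 2 ^ n"
proof -
  have "mtrace (pauli_op n u * A) = (\<Sum>a<2 ^ n. (pauli_op n u * A) $$ (a, a))"
    using assms by (simp add: mtrace_def)
  also have "\<dots> = (\<Sum>a<2 ^ n. \<Sum>b<2 ^ n. pauli_op n u $$ (a, b) * A $$ (b, a))"
    using assms by (intro sum.cong refl index_mult_mat_sum[OF pauli_op_carrier]) auto
  finally show ?thesis by (simp add: pauli_coeff_def)
qed

lemma pauli_expansion:
  assumes A: "A \<in> carrier_mat (2 ^ n) (2 ^ n)" and i: "i < 2 ^ n" and j: "j < 2 ^ n"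
  shows "A $$ (i, j) = (\<Sum>s\<in>pauli_strings n. pauli_coeff n A s * pauli_op n s $$ (i, j))"
proof -
  have orth: "(\<Sum>s\<in>pauli_strings n. pauli_op n s $$ (a, b) * pauli_op n s $$ (i, j))
      = (if a = j \<and> b = i then 2 ^ n else 0)" if a: "a < 2 ^ n" and b: "b < 2 ^ n" for a b
  proof -
    have "(\<Sum>s\<in>pauli_strings n. pauli_op n s $$ (a, b) * pauli_op n s $$ (i, j))
       = (\<Sum>s\<in>pauli_strings n. \<Prod>k<n. pauli1 (s ! k) $$ (qbit a k, qbit b k) * pauli1 (s ! k) $$ (qbit i k, qbit j k))"
      using a b i j by (simp add: pauli_op_entry prod.distrib)
    also have "\<dots> = (\<Prod>k<n. \<Sum>c<4. pauli1 c $$ (qbit a k, qbit b k) * pauli1 c $$ (qbit i k, qbit j k))"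
      by (rule sum_pauli_strings_prod)
    also have "\<dots> = (\<Prod>k<n. if qbit a k = qbit j k \<and> qbit b k = qbit i k then 2 else 0)"
      by (intro prod.cong refl pauli1_completeness) auto
    also have "\<dots> = (if a = j \<and> b = i then 2 ^ n else 0)"
      unfolding prod_if_const using eq_if_qbits_eq[OF a j] eq_if_qbits_eq[OF b i] by auto
    finally show ?thesis .
  qed
  have "(\<Sum>s\<in>pauli_strings n. pauli_coeff n A s * pauli_op n s $$ (i, j))
     = (\<Sum>s\<in>pauli_strings n. \<Sum>a<2 ^ n. \<Sum>b<2 ^ n.
          A $$ (b, a) * (pauli_op n s $$ (a, b) * pauli_op n s $$ (i, j)) / 2 ^ n)"
    unfolding pauli_coeff_eq_sum[OF A]
    by (intro sum.cong refl) (simp add: sum_distrib_left sum_distrib_right sum_divide_distrib mult_ac)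
  also have "\<dots> = (\<Sum>a<2 ^ n. \<Sum>b<2 ^ n. A $$ (b, a) *
          (\<Sum>s\<in>pauli_strings n. pauli_op n s $$ (a, b) * pauli_op n s $$ (i, j)) / 2 ^ n)"
    by (simp add: sum_divide_distrib sum_distrib_left sum.swap[of _ "pauli_strings n"])
  also have "\<dots> = (\<Sum>a<2 ^ n. \<Sum>b<2 ^ n. if b = i then if a = j then A $$ (i, j) else 0 else 0)"
    by (intro sum.cong refl) (simp add: orth)
  also have "\<dots> = A $$ (i, j)"
    using i j by simp
  finally show ?thesis by simp
qed

section \<open>Pauli supports\<close>

definition pauli_support :: "nat \<Rightarrow> complex mat \<Rightarrow> nat list set" where
  "pauli_support n A = {s \<in> pauli_strings n. pauli_coeff n A s \<noteq> 0}"

lemma pauli_sparsity_eq_card: "pauli_sparsity n A = card (pauli_support n A)"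
  by (simp add: pauli_sparsity_def pauli_support_def)

definition pauli_subgroup :: "nat \<Rightarrow> nat list set \<Rightarrow> bool" where
  "pauli_subgroup n K \<longleftrightarrow>
     K \<subseteq> pauli_strings n \<and> replicate n 0 \<in> K \<and> (\<forall>s\<in>K. \<forall>t\<in>K. pauli_xor s t \<in> K)"

lemma pauli_coeff_lincomb:
  assumes A: "A \<in> carrier_mat (2 ^ n) (2 ^ n)" and X: "finite X"
    and M: "\<And>x. x \<in> X \<Longrightarrow> M x \<in> carrier_mat (2 ^ n) (2 ^ n)"
    and entry: "\<And>i j. i < 2 ^ n \<Longrightarrow> j < 2 ^ n \<Longrightarrow> A $$ (i, j) = (\<Sum>x\<in>X. c x * M x $$ (i, j))"
  shows "pauli_coeff n A u = (\<Sum>x\<in>X. c x * pauli_coeff n (M x) u)"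
proof -
  have "pauli_coeff n A u
      = (\<Sum>a<2 ^ n. \<Sum>b<2 ^ n. \<Sum>x\<in>X. c x * (pauli_op n u $$ (a, b) * M x $$ (b, a))) / 2 ^ n"
    unfolding pauli_coeff_eq_sum[OF A] by (simp add: entry sum_distrib_left ac_simps)
  also have "\<dots> = (\<Sum>x\<in>X. c x * ((\<Sum>a<2 ^ n. \<Sum>b<2 ^ n. pauli_op n u $$ (a, b) * M x $$ (b, a)) / 2 ^ n))"
    by (simp add: sum_divide_distrib sum_distrib_left sum.swap[of _ X])
  also have "\<dots> = (\<Sum>x\<in>X. c x * pauli_coeff n (M x) u)"
    by (intro sum.cong refl) (simp add: pauli_coeff_eq_sum[OF M])
  finally show ?thesis .
qed

lemma pauli_support_lincomb:
  assumes A: "A \<in> carrier_mat (2 ^ n) (2 ^ n)" and X: "finite X"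
    and M: "\<And>x. x \<in> X \<Longrightarrow> M x \<in> carrier_mat (2 ^ n) (2 ^ n)"
    and MK: "\<And>x. x \<in> X \<Longrightarrow> pauli_support n (M x) \<subseteq> K"
    and entry: "\<And>i j. i < 2 ^ n \<Longrightarrow> j < 2 ^ n \<Longrightarrow> A $$ (i, j) = (\<Sum>x\<in>X. c x * M x $$ (i, j))"
  shows "pauli_support n A \<subseteq> K"
proof
  fix u assume u: "u \<in> pauli_support n A"
  show "u \<in> K"
  proof (rule ccontr)
    assume "u \<notin> K"
    then have "pauli_coeff n (M x) u = 0" if "x \<in> X" for x
      using MK[OF that] u by (auto simp: pauli_support_def)
    then have "pauli_coeff n A u = 0"
      by (simp add: pauli_coeff_lincomb[OF A X M entry])
    with u show False by (simp add: pauli_support_def)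
  qed
qed

lemma pauli_coeff_smult:
  assumes "A \<in> carrier_mat (2 ^ n) (2 ^ n)"
  shows "pauli_coeff n (c \<cdot>\<^sub>m A) u = c * pauli_coeff n A u"
  using assms by (simp add: pauli_coeff_def mtrace_def mult_smult_distrib[of _ "2 ^ n" "2 ^ n"]
      sum_distrib_left)

lemma pauli_support_smult:
  "A \<in> carrier_mat (2 ^ n) (2 ^ n) \<Longrightarrow> pauli_support n (c \<cdot>\<^sub>m A) \<subseteq> pauli_support n A"
  by (auto simp: pauli_support_def pauli_coeff_smult)

lemma pauli_support_one: "pauli_support n (1\<^sub>m (2 ^ n)) = {replicate n 0}"
proof -
  have "replicate n 0 \<in> pauli_strings n" by (simp add: pauli_strings_iff)
  then show ?thesis
    by (auto simp: pauli_support_def pauli_coeff_def mtrace_pauli_op split: if_splits)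
qed

lemma pauli_support_pauli_op: "t \<in> pauli_strings n \<Longrightarrow> pauli_support n (pauli_op n t) = {t}"
  by (auto simp: pauli_support_def pauli_coeff_pauli_op split: if_splits)

lemma pauli_expansion_on:
  assumes A: "A \<in> carrier_mat (2 ^ n) (2 ^ n)" and K: "pauli_support n A \<subseteq> K" "K \<subseteq> pauli_strings n"
    and i: "i < 2 ^ n" and j: "j < 2 ^ n"
  shows "A $$ (i, j) = (\<Sum>s\<in>K. pauli_coeff n A s * pauli_op n s $$ (i, j))"
  unfolding pauli_expansion[OF A i j]
  using K by (intro sum.mono_neutral_right finite_pauli_strings) (auto simp: pauli_support_def)

lemma index_mult_pauli_expansion_on:
  assumes K: "K \<subseteq> pauli_strings n"
    and A: "A \<in> carrier_mat (2 ^ n) (2 ^ n)" and B: "B \<in> carrier_mat (2 ^ n) (2 ^ n)"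
    and AK: "pauli_support n A \<subseteq> K" and BK: "pauli_support n B \<subseteq> K"
    and i: "i < 2 ^ n" and j: "j < 2 ^ n"
  shows "(A * B) $$ (i, j) = (\<Sum>(s, t)\<in>K \<times> K.
           pauli_coeff n A s * pauli_coeff n B t * pauli_phase n s t * pauli_op n (pauli_xor s t) $$ (i, j))"
proof -
  let ?a = "pauli_coeff n A" and ?b = "pauli_coeff n B"
  have "(A * B) $$ (i, j)
      = (\<Sum>l<2 ^ n. (\<Sum>s\<in>K. ?a s * pauli_op n s $$ (i, l)) * (\<Sum>t\<in>K. ?b t * pauli_op n t $$ (l, j)))"
    unfolding index_mult_mat_sum[OF A B i j]
    using i j by (intro sum.cong refl) (simp add: pauli_expansion_on[OF A AK K] pauli_expansion_on[OF B BK K])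
  also have "\<dots> = (\<Sum>l<2 ^ n. \<Sum>s\<in>K. \<Sum>t\<in>K. ?a s * ?b t * (pauli_op n s $$ (i, l) * pauli_op n t $$ (l, j)))"
    by (simp add: sum_product mult_ac)
  also have "\<dots> = (\<Sum>s\<in>K. \<Sum>t\<in>K. \<Sum>l<2 ^ n. ?a s * ?b t * (pauli_op n s $$ (i, l) * pauli_op n t $$ (l, j)))"
    by (subst sum.swap, rule sum.cong[OF refl], rule sum.swap)
  also have "\<dots> = (\<Sum>s\<in>K. \<Sum>t\<in>K. ?a s * ?b t * (\<Sum>l<2 ^ n. pauli_op n s $$ (i, l) * pauli_op n t $$ (l, j)))"
    by (simp add: sum_distrib_left)
  also have "\<dots> = (\<Sum>s\<in>K. \<Sum>t\<in>K. ?a s * ?b t * (pauli_op n s * pauli_op n t) $$ (i, j))"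
    by (simp add: index_mult_mat_sum[OF pauli_op_carrier pauli_op_carrier i j] del: index_mult_mat)
  also have "\<dots> = (\<Sum>(s, t)\<in>K \<times> K. ?a s * ?b t * pauli_phase n s t * pauli_op n (pauli_xor s t) $$ (i, j))"
    using i j by (auto simp: sum.cartesian_product pauli_op_mult[OF subsetD[OF K] subsetD[OF K]]
        simp del: index_mult_mat intro!: sum.cong)
  finally show ?thesis .
qed

lemma pauli_support_mult:
  assumes K: "pauli_subgroup n K"
    and A: "A \<in> carrier_mat (2 ^ n) (2 ^ n)" and B: "B \<in> carrier_mat (2 ^ n) (2 ^ n)"
    and AK: "pauli_support n A \<subseteq> K" and BK: "pauli_support n B \<subseteq> K"
  shows "pauli_support n (A * B) \<subseteq> K"
proof -
  have Ks: "K \<subseteq> pauli_strings n"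
    and Kx: "\<And>s t. s \<in> K \<Longrightarrow> t \<in> K \<Longrightarrow> pauli_xor s t \<in> K"
    using K by (auto simp: pauli_subgroup_def)
  have fin: "finite K" using Ks finite_pauli_strings finite_subset by blast
  have xorK: "pauli_support n (pauli_op n (pauli_xor s t)) \<subseteq> K" if "s \<in> K" "t \<in> K" for s t
    using that Ks Kx by (subst pauli_support_pauli_op) (auto intro: pauli_xor_in_pauli_strings)
  show ?thesis
    using index_mult_pauli_expansion_on[OF Ks A B AK BK]
    by (intro pauli_support_lincomb[OF mult_carrier_mat[OF A B] finite_cartesian_product[OF fin fin],
          where M = "\<lambda>(s, t). pauli_op n (pauli_xor s t)"]) (auto simp: case_prod_unfold intro: subsetD[OF xorK])
qed

lemma pauli_support_pow:
  assumes K: "pauli_subgroup n K"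
    and A: "A \<in> carrier_mat (2 ^ n) (2 ^ n)" and AK: "pauli_support n A \<subseteq> K"
  shows "pauli_support n (A ^\<^sub>m k) \<subseteq> K"
proof (induction k)
  case 0
  then show ?case using A K by (simp add: pauli_support_one pauli_subgroup_def)
next
  case (Suc k)
  then show ?case using pauli_support_mult[OF K _ A _ AK] A by simp
qed

lemma pauli_support_poly_mat:
  assumes K: "pauli_subgroup n K"
    and A: "A \<in> carrier_mat (2 ^ n) (2 ^ n)" and AK: "pauli_support n A \<subseteq> K"
  shows "pauli_support n (poly_mat p A) \<subseteq> K"
  by (rule pauli_support_lincomb[OF poly_mat_carrier[OF A] finite_atMost, where M = "\<lambda>k. A ^\<^sub>m k"])
    (use A pauli_support_pow[OF K A AK] in \<open>auto simp: poly_mat_def\<close>)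

lemma pauli_coeff_sums:
  assumes A: "A \<in> carrier_mat (2 ^ n) (2 ^ n)" and M: "\<And>k. M k \<in> carrier_mat (2 ^ n) (2 ^ n)"
    and entry: "\<And>i j. i < 2 ^ n \<Longrightarrow> j < 2 ^ n \<Longrightarrow> (\<lambda>k. M k $$ (i, j)) sums A $$ (i, j)"
  shows "(\<lambda>k. pauli_coeff n (M k) u) sums pauli_coeff n A u"
  unfolding pauli_coeff_eq_sum[OF A] pauli_coeff_eq_sum[OF M]
  by (intro sums_divide sums_sum sums_mult entry) auto

lemma pauli_support_mexp:
  assumes K: "pauli_subgroup n K"
    and A: "A \<in> carrier_mat (2 ^ n) (2 ^ n)" and AK: "pauli_support n A \<subseteq> K"
  shows "pauli_support n (mexp A) \<subseteq> K"
proof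
  fix u assume u: "u \<in> pauli_support n (mexp A)"
  have series: "(\<lambda>k. pauli_coeff n ((1 / of_nat (fact k)) \<cdot>\<^sub>m A ^\<^sub>m k) u) sums pauli_coeff n (mexp A) u"
    using mexp_entry_sums[OF A] A
    by (intro pauli_coeff_sums mexp_carrier[OF A]) (auto simp: divide_inverse mult.commute)
  have terms: "pauli_support n ((1 / of_nat (fact k)) \<cdot>\<^sub>m A ^\<^sub>m k) \<subseteq> K" for k
    using pauli_support_smult[OF pow_carrier_mat[OF A]] pauli_support_pow[OF K A AK] by blast
  show "u \<in> K"
  proof (rule ccontr)
    assume "u \<notin> K"
    then have "pauli_coeff n ((1 / of_nat (fact k)) \<cdot>\<^sub>m A ^\<^sub>m k) u = 0" for k
      using terms[of k] u by (auto simp: pauli_support_def)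
    then have "(\<lambda>k. pauli_coeff n ((1 / of_nat (fact k)) \<cdot>\<^sub>m A ^\<^sub>m k) u) sums 0"
      by (simp add: sums_0)
    with series u show False
      using sums_unique2 by (force simp: pauli_support_def)
  qed
qed

inductive_set pauli_span :: "nat \<Rightarrow> nat list set \<Rightarrow> nat list set" for n S where
  identity: "replicate n 0 \<in> pauli_span n S"
| xor: "u \<in> pauli_span n S \<Longrightarrow> s \<in> S \<Longrightarrow> pauli_xor s u \<in> pauli_span n S"

lemma pauli_span_subset: "S \<subseteq> pauli_strings n \<Longrightarrow> pauli_span n S \<subseteq> pauli_strings n"
proof
  fix u assume S: "S \<subseteq> pauli_strings n" and u: "u \<in> pauli_span n S"
  from u S show "u \<in> pauli_strings n"
  proof (induction rule: pauli_span.induct)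
    case identity then show ?case by (simp add: pauli_strings_iff)
  next
    case (xor u s) then show ?case by (auto intro: pauli_xor_in_pauli_strings)
  qed
qed

lemma pauli_span_xor:
  assumes S: "S \<subseteq> pauli_strings n" and u: "u \<in> pauli_span n S" and v: "v \<in> pauli_span n S"
  shows "pauli_xor u v \<in> pauli_span n S"
  using u
proof (induction rule: pauli_span.induct)
  case identity
  then show ?case using pauli_xor_identity v pauli_span_subset[OF S] by auto
next
  case (xor u s)
  have "pauli_xor (pauli_xor s u) v = pauli_xor s (pauli_xor u v)"
    using xor pauli_span_subset[OF S] S v by (intro pauli_xor_assoc) auto
  then show ?case using xor by (auto intro: pauli_span.xor)
qed

lemma pauli_subgroup_pauli_span: "S \<subseteq> pauli_strings n \<Longrightarrow> pauli_subgroup n (pauli_span n S)"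
  by (auto simp: pauli_subgroup_def pauli_span_subset pauli_span_xor intro: pauli_span.identity)

lemma subset_pauli_span: "S \<subseteq> pauli_strings n \<Longrightarrow> S \<subseteq> pauli_span n S"
proof
  fix s assume S: "S \<subseteq> pauli_strings n" and s: "s \<in> S"
  then have "pauli_xor s (replicate n 0) \<in> pauli_span n S"
    by (intro pauli_span.xor pauli_span.identity)
  then show "s \<in> pauli_span n S"
    using S s by (simp add: pauli_xor_commute[of s] pauli_xor_identity subsetD)
qed

lemma pauli_span_insert:
  assumes S: "insert s F \<subseteq> pauli_strings n"
  shows "pauli_span n (insert s F) \<subseteq> pauli_span n F \<union> pauli_xor s ` pauli_span n F"
proof
  have F: "F \<subseteq> pauli_strings n" and s: "s \<in> pauli_strings n" using S by auto
  fix u assume "u \<in> pauli_span n (insert s F)"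
  then show "u \<in> pauli_span n F \<union> pauli_xor s ` pauli_span n F"
  proof (induction rule: pauli_span.induct)
    case identity then show ?case by (auto intro: pauli_span.identity)
  next
    case (xor u t)
    have t: "t \<in> pauli_strings n" using xor S by auto
    show ?case
    proof (cases "u \<in> pauli_span n F")
      case True
      then show ?thesis using xor by (auto intro: pauli_span.xor)
    next
      case False
      then obtain u' where u': "u' \<in> pauli_span n F" "u = pauli_xor s u'" using xor by auto
      have u's: "u' \<in> pauli_strings n" using u' pauli_span_subset[OF F] by auto
      show ?thesis
      proof (cases "t = s")
        case True
        have "pauli_xor t u = u'" unfolding True u'(2)
          using s u's by (simp add: pauli_xor_assoc[symmetric] pauli_xor_self pauli_xor_identity)
        then show ?thesis using u' by auto
      next
        case False
        then have tF: "t \<in> F" using xor by auto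
        have "pauli_xor t u = pauli_xor s (pauli_xor t u')" unfolding u'(2)
          using s u's t by (simp add: pauli_xor_assoc[symmetric] pauli_xor_commute[of t s])
        then show ?thesis using u' tF by (auto intro: pauli_span.xor)
      qed
    qed
  qed
qed

lemma card_pauli_span_le:
  assumes "finite S" "S \<subseteq> pauli_strings n"
  shows "card (pauli_span n S) \<le> 2 ^ card S"
  using assms
proof (induction S rule: finite_induct)
  case empty
  have "pauli_span n {} \<subseteq> {replicate n 0}"
  proof
    fix u assume "u \<in> pauli_span n {}" then show "u \<in> {replicate n 0}"
      by (induction rule: pauli_span.induct) auto
  qed
  then show ?case using card_mono[of "{replicate n 0}"] by auto
next
  case (insert s F)
  have fin: "finite (pauli_span n F)"
    using pauli_span_subset[of F n] insert finite_pauli_strings finite_subset by blast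
  have "card (pauli_span n (insert s F)) \<le> card (pauli_span n F \<union> pauli_xor s ` pauli_span n F)"
    using pauli_span_insert[OF insert.prems] fin by (intro card_mono) auto
  also have "\<dots> \<le> card (pauli_span n F) + card (pauli_span n F)"
    using card_Un_le card_image_le[OF fin] by (meson add_left_mono order_trans)
  also have "\<dots> \<le> 2 ^ card (insert s F)"
    using insert by simp
  finally show ?case .
qed

lemma pauli_sparsity_le_card:
  "pauli_subgroup n K \<Longrightarrow> pauli_support n A \<subseteq> K \<Longrightarrow> pauli_sparsity n A \<le> card K"
  unfolding pauli_sparsity_eq_card pauli_subgroup_def
  by (meson card_mono finite_pauli_strings finite_subset)

lemma pauli_support_mexp_smult:
  assumes "pauli_subgroup n K" "A \<in> carrier_mat (2 ^ n) (2 ^ n)" "pauli_support n A \<subseteq> K"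
  shows "pauli_support n (mexp (c \<cdot>\<^sub>m A)) \<subseteq> K"
  using assms pauli_support_mexp pauli_support_smult by (metis smult_carrier_mat order_trans)

lemma pauli_span_of_supports:
  assumes "pauli_sparsity n A \<le> m" "pauli_sparsity n B \<le> m"
  defines "K \<equiv> pauli_span n (pauli_support n A \<union> pauli_support n B)"
  shows "pauli_subgroup n K" "pauli_support n A \<subseteq> K" "pauli_support n B \<subseteq> K" "card K \<le> 4 ^ m"
proof -
  let ?S = "pauli_support n A \<union> pauli_support n B"
  have S: "?S \<subseteq> pauli_strings n" "finite ?S"
    unfolding pauli_support_def using finite_pauli_strings finite_subset by auto
  show "pauli_subgroup n K"
    unfolding K_def by (rule pauli_subgroup_pauli_span[OF S(1)])
  show "pauli_support n A \<subseteq> K" "pauli_support n B \<subseteq> K"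
    using subset_pauli_span[OF S(1)] unfolding K_def by auto
  have "card ?S \<le> 2 * m"
    using card_Un_le[of "pauli_support n A" "pauli_support n B"] assms(1,2)
    unfolding pauli_sparsity_eq_card by linarith
  then have "card K \<le> 2 ^ (2 * m)"
    using card_pauli_span_le[OF S(2,1)] power_increasing[of "card ?S" "2 * m" "2::nat"]
    unfolding K_def by linarith
  then show "card K \<le> 4 ^ m"
    by (simp add: power_mult)
qed

theorem mainTheorem12:
  fixes n m :: nat and H Hj W :: "complex mat" and T :: real
  assumes "H \<in> carrier_mat (2^n) (2^n)" and "is_hermitian H" and "pauli_sparsity n H \<le> m"
    and "Hj \<in> carrier_mat (2^n) (2^n)" and "is_hermitian Hj" and "pauli_sparsity n Hj \<le> m"
    and "W \<in> carrier_mat (2^n) (2^n)" and "is_hermitian W" and "op_norm W < pi"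
    and "\<exists>\<phi>::real. mexp ((- \<i>) \<cdot>\<^sub>m W) =
           exp (\<i> * complex_of_real \<phi>) \<cdot>\<^sub>m
             (mexp ((\<i> * complex_of_real T) \<cdot>\<^sub>m H) * mexp ((- \<i> * complex_of_real T) \<cdot>\<^sub>m Hj))"
  shows "pauli_sparsity n W \<le> 4 ^ m"
proof -
  obtain K where K: "pauli_subgroup n K" and HK: "pauli_support n H \<subseteq> K"
    and HjK: "pauli_support n Hj \<subseteq> K" and card: "card K \<le> 4 ^ m"
    using pauli_span_of_supports[OF assms(3,6)] by blast
  obtain \<phi> :: real where U: "mexp ((- \<i>) \<cdot>\<^sub>m W) = exp (\<i> * complex_of_real \<phi>) \<cdot>\<^sub>m
      (mexp ((\<i> * complex_of_real T) \<cdot>\<^sub>m H) * mexp ((- \<i> * complex_of_real T) \<cdot>\<^sub>m Hj))"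
    using assms(10) by blast
  have "pauli_support n (mexp ((- \<i>) \<cdot>\<^sub>m W)) \<subseteq> K"
    unfolding U using assms(1,4)
    by (intro order_trans[OF pauli_support_smult] pauli_support_mult[OF K]
        pauli_support_mexp_smult[OF K _ HK] pauli_support_mexp_smult[OF K _ HjK])
      (auto intro!: mult_carrier_mat mexp_carrier)
  moreover obtain p where "W = poly_mat p (mexp ((- \<i>) \<cdot>\<^sub>m W))"
    using hermitian_eq_poly_mat_mexp[OF assms(7,8,9)] by blast
  ultimately have "pauli_support n W \<subseteq> K"
    using pauli_support_poly_mat[OF K] assms(7) by (metis mexp_carrier smult_carrier_mat)
  then show ?thesis
    using pauli_sparsity_le_card[OF K] card by (meson order_trans)
qed

end
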